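(* There is an absolute constant $c>0$ such that for all $k\ge 2$, $$2^{ck}\le R_3(\mathcal{B}(K_4),k)\le R(K_4^*,k)+1,$$ and moreover $R(K_4^*,k)\le e(1+o(1))(k-1)k!$ as $k\to\infty$.
   Context: For a graph $G$, a hypergraph $H$ is a Berge-$G$ hypergraph if there are an injective map $\phi:V(G)\to V(H)$ and pairwise distinct hyperedges $e_{xy}\in E(H)$, one for each $xy\in E(G)$, with $\phi(x),\phi(y)\in e_{xy}$. $\mathcal{B}(G)$ denotes the family of all Berge-$G$ hypergraphs. For a family $\mathcal{H}$ of $3$-uniform hypergraphs, $R_3(\mathcal{H},k)$ is the smallest $n$ such that every $k$-coloring of the hyperedges of the complete $3$-uniform hypergraph $K_n^3$ contains a monochromatic subhypergraph belonging to $\mathcal{H}$. For a family $\mathcal{G}$ of graphs, $R(\mathcal{G},k)$ is the smallest $n$ such that every $k$-coloring of the edges of $K_n$ contains a monochromatic subgraph isomorphic to some member of $\mathcal{G}$. $K_4^*$ is the family of graphs consisting of: $K_4$; the graph obtained from $K_4$ minus an edge by attaching a pendant edge at one of its two vertices of degree $2$; and the triangle with a pendant edge attached at each of its three vertices. (Equivalently, for a vertex $v$ of $K_4$ with neighbors $q_1,q_2,q_3$, $K_4^*$ is the family of graphs obtained from the triangle $K_4-v$ by adding, for each $i$, an edge $q_ir_i$ not in the triangle, with $r_i$ a vertex of the triangle or a new vertex, new vertices possibly shared, the three added edges pairwise distinct.) *)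

theory Defs
  imports Complex_Main
begin

text \<open>A (simple) graph is a pair (V, E) with E a set of 2-element subsets of V.
  A hypergraph is a pair (V, E) with E a set of subsets of V.\<close>

type_synonym 'a graph = "'a set \<times> 'a set set"
type_synonym 'a hgraph = "'a set \<times> 'a set set"

definition is_berge :: "'b hgraph \<Rightarrow> 'a graph \<Rightarrow> bool" where
  "is_berge H G \<longleftrightarrow> (\<exists>\<phi> e.
      inj_on \<phi> (fst G) \<and> \<phi> ` fst G \<subseteq> fst H \<and>
      inj_on e (snd G) \<and> e ` snd G \<subseteq> snd H \<and>
      (\<forall>xy \<in> snd G. \<phi> ` xy \<subseteq> e xy))"

definition subhypergraph :: "'b hgraph \<Rightarrow> 'b hgraph \<Rightarrow> bool" where
  "subhypergraph H' H \<longleftrightarrow> fst H' \<subseteq> fst H \<and> snd H' \<subseteq> snd H \<and> (\<forall>e\<in>snd H'. e \<subseteq> fst H')"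

definition contains_copy :: "'b graph \<Rightarrow> 'a graph \<Rightarrow> bool" where
  "contains_copy G F \<longleftrightarrow> (\<exists>\<phi>. inj_on \<phi> (fst F) \<and> \<phi> ` fst F \<subseteq> fst G \<and>
      (\<forall>xy \<in> snd F. \<phi> ` xy \<in> snd G))"

definition R3_berge :: "'a graph \<Rightarrow> nat \<Rightarrow> nat" where
  "R3_berge G k = Inf {n. \<forall>f :: nat set \<Rightarrow> nat.
      (\<forall>e. e \<subseteq> {..<n} \<and> card e = 3 \<longrightarrow> f e < k) \<longrightarrow>
      (\<exists>i<k. \<exists>H'. subhypergraph H' ({..<n}, {e. e \<subseteq> {..<n} \<and> card e = 3 \<and> f e = i})
                  \<and> is_berge H' G)}"

definition R_graph :: "'a graph set \<Rightarrow> nat \<Rightarrow> nat" where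
  "R_graph \<G> k = Inf {n. \<forall>f :: nat set \<Rightarrow> nat.
      (\<forall>e. e \<subseteq> {..<n} \<and> card e = 2 \<longrightarrow> f e < k) \<longrightarrow>
      (\<exists>i<k. \<exists>F\<in>\<G>. contains_copy ({..<n}, {e. e \<subseteq> {..<n} \<and> card e = 2 \<and> f e = i}) F)}"

definition K4 :: "nat graph" where
  "K4 = ({0,1,2,3}, {{0,1},{0,2},{0,3},{1,2},{1,3},{2,3}})"

text \<open>K_4 minus the edge 23, with pendant edge 24 at the degree-2 vertex 2.\<close>
definition K4_minus_pendant :: "nat graph" where
  "K4_minus_pendant = ({0,1,2,3,4}, {{0,1},{0,2},{0,3},{1,2},{1,3},{2,4}})"

text \<open>Triangle 012 with pendant edges 03, 14, 25.\<close>
definition triangle_pendants :: "nat graph" where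
  "triangle_pendants = ({0,1,2,3,4,5}, {{0,1},{0,2},{1,2},{0,3},{1,4},{2,5}})"

definition K4_star :: "nat graph set" where
  "K4_star = {K4, K4_minus_pendant, triangle_pendants}"

end

(*
  Call a vertex heavy in colour c if it has more than two neighbours
  in colour c.  If no colour class contains a member of K4*, then no monochromatic triangle has
  three heavy corners: each corner would have a neighbour of the same colour outside the
  triangle, completing a member of K4*.  A k-colouring with this property has at most
  colour_bound k <= 10 k! vertices.  Indeed, by double counting some vertex v has at most 2k
  light neighbours in total; in a colour c in which v is heavy, the heavy c-neighbours of v span
  no edge of colour c, so induction on the number of colours bounds them by colour_bound (k-1).
  As 10 k! <= e (k-1) k! for k >= 6, the o(1) term can be taken to be 0.

  R3(B(K4), k) <= R(K4*, k) + 1.  Colour each pair of the first N vertices by the colour of the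
  triple it forms with the last vertex v.  A monochromatic member of K4*, i.e. a triangle
  q1 q2 q3 with edges qi ri, yields the Berge-K4 on v, q1, q2, q3 with hyperedges v qi qj and
  v qi ri.

  Since n^3 (7/9)^k < 1 for n = 2^(k div 9), a union bound gives maps h_1, ...,
  h_k from n points to three values such that every triple is rainbow under some h_j.  Colour
  a triple with the least such j; a Berge-K4 of colour j would make h_j injective on its four
  core vertices.
*)
theory Submission
  imports Defs "HOL-Library.FuncSet"
begin

section \<open>Arrowing\<close>

definition colour_graph :: "'a set \<Rightarrow> ('a set \<Rightarrow> nat) \<Rightarrow> nat \<Rightarrow> 'a graph" where
  "colour_graph V f i = (V, {e. e \<subseteq> V \<and> card e = 2 \<and> f e = i})"

definition colour_hypergraph :: "'a set \<Rightarrow> ('a set \<Rightarrow> nat) \<Rightarrow> nat \<Rightarrow> 'a hgraph" where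
  "colour_hypergraph V f i = (V, {e. e \<subseteq> V \<and> card e = 3 \<and> f e = i})"

definition graph_arrows :: "'a graph set \<Rightarrow> nat \<Rightarrow> nat \<Rightarrow> bool" where
  "graph_arrows \<G> k n \<longleftrightarrow> (\<forall>f. (\<forall>e. e \<subseteq> {..<n} \<and> card e = 2 \<longrightarrow> f e < k) \<longrightarrow>
     (\<exists>i<k. \<exists>F\<in>\<G>. contains_copy (colour_graph {..<n} f i) F))"

definition berge_arrows :: "'a graph \<Rightarrow> nat \<Rightarrow> nat \<Rightarrow> bool" where
  "berge_arrows G k n \<longleftrightarrow> (\<forall>f. (\<forall>e. e \<subseteq> {..<n} \<and> card e = 3 \<longrightarrow> f e < k) \<longrightarrow>
     (\<exists>i<k. \<exists>H. subhypergraph H (colour_hypergraph {..<n} f i) \<and> is_berge H G))"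

lemma R_graph_eq_Inf_graph_arrows: "R_graph \<G> k = Inf {n. graph_arrows \<G> k n}"
  by (simp add: R_graph_def graph_arrows_def colour_graph_def)

lemma R3_berge_eq_Inf_berge_arrows: "R3_berge G k = Inf {n. berge_arrows G k n}"
  by (simp add: R3_berge_def berge_arrows_def colour_hypergraph_def)

lemma Inf_nat_Collect:
  fixes n :: nat
  assumes "P n"
  shows "P (Inf (Collect P))" "Inf (Collect P) \<le> n"
  using assms by (simp_all add: Inf_nat_def LeastI Least_le)

lemma subhypergraph_trans_le:
  "subhypergraph H H' \<Longrightarrow> fst H' \<subseteq> fst H'' \<Longrightarrow> snd H' \<subseteq> snd H'' \<Longrightarrow> subhypergraph H H''"
  by (auto simp: subhypergraph_def)

lemma berge_arrows_mono:
  assumes "berge_arrows G k m" "m \<le> n"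
  shows "berge_arrows G k n"
  unfolding berge_arrows_def
proof (intro allI impI)
  fix f :: "nat set \<Rightarrow> nat"
  assume "\<forall>e. e \<subseteq> {..<n} \<and> card e = 3 \<longrightarrow> f e < k"
  then have "\<forall>e. e \<subseteq> {..<m} \<and> card e = 3 \<longrightarrow> f e < k"
    using \<open>m \<le> n\<close> by (meson lessThan_subset_iff order_trans)
  then obtain i H where "i < k" "subhypergraph H (colour_hypergraph {..<m} f i)" "is_berge H G"
    using assms(1) unfolding berge_arrows_def by blast
  moreover have "subhypergraph H (colour_hypergraph {..<n} f i)"
    by (rule subhypergraph_trans_le[OF calculation(2)]) (use \<open>m \<le> n\<close> in \<open>auto simp: colour_hypergraph_def\<close>)
  ultimately show "\<exists>i<k. \<exists>H. subhypergraph H (colour_hypergraph {..<n} f i) \<and> is_berge H G"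
    by blast
qed

text \<open>The first hypothesis rules out the junk value \<open>Inf {} = 0\<close>.\<close>
lemma less_R3_berge:
  assumes "berge_arrows G k m" "\<not> berge_arrows G k n"
  shows "n < R3_berge G k"
proof (rule ccontr)
  assume "\<not> n < R3_berge G k"
  moreover have "berge_arrows G k (R3_berge G k)"
    unfolding R3_berge_eq_Inf_berge_arrows by (rule Inf_nat_Collect(1)) (rule assms(1))
  ultimately show False
    using assms(2) berge_arrows_mono by (metis not_less)
qed

section \<open>Colourings without heavy monochromatic triangles\<close>

definition colour_nbrs :: "'a set \<Rightarrow> ('a set \<Rightarrow> 'c) \<Rightarrow> 'c \<Rightarrow> 'a \<Rightarrow> 'a set" where
  "colour_nbrs V f c x = {y\<in>V. y \<noteq> x \<and> f {x, y} = c}"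

definition heavy :: "'a set \<Rightarrow> ('a set \<Rightarrow> 'c) \<Rightarrow> 'c \<Rightarrow> 'a \<Rightarrow> bool" where
  "heavy V f c x \<longleftrightarrow> 2 < card (colour_nbrs V f c x)"

definition no_heavy_triangle :: "'a set \<Rightarrow> ('a set \<Rightarrow> 'c) \<Rightarrow> bool" where
  "no_heavy_triangle V f \<longleftrightarrow> \<not> (\<exists>c x y z. {x, y, z} \<subseteq> V \<and> distinct [x, y, z] \<and>
     f {x, y} = c \<and> f {x, z} = c \<and> f {y, z} = c \<and> heavy V f c x \<and> heavy V f c y \<and> heavy V f c z)"

lemma colour_nbrs_mono: "U \<subseteq> V \<Longrightarrow> colour_nbrs U f c x \<subseteq> colour_nbrs V f c x"
  by (auto simp: colour_nbrs_def)

lemma heavy_mono: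
  assumes "heavy U f c x" "U \<subseteq> V" "finite V"
  shows "heavy V f c x"
proof -
  have "card (colour_nbrs U f c x) \<le> card (colour_nbrs V f c x)"
    using assms(2,3) by (intro card_mono colour_nbrs_mono) (auto simp: colour_nbrs_def)
  with assms(1) show ?thesis by (simp add: heavy_def)
qed

lemma no_heavy_triangle_subset:
  "no_heavy_triangle V f \<Longrightarrow> U \<subseteq> V \<Longrightarrow> finite V \<Longrightarrow> no_heavy_triangle U f"
  unfolding no_heavy_triangle_def by (meson heavy_mono order_trans)

lemma heavy_has_nbr_outside:
  assumes "heavy V f c x"
  obtains r where "r \<in> colour_nbrs V f c x" "r \<notin> {y, z}"
proof -
  have "card {y, z} < card (colour_nbrs V f c x)"
    using assms by (cases "y = z") (auto simp: heavy_def)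
  then have "\<not> colour_nbrs V f c x \<subseteq> {y, z}"
    by (meson card_mono finite.emptyI finite.insertI not_le)
  then show ?thesis using that by blast
qed

lemma card_filter_eq_sum: "finite A \<Longrightarrow> card {x\<in>A. P x} = (\<Sum>x\<in>A. if P x then 1 else 0)"
  by (simp add: sum.inter_filter[symmetric])

text \<open>Double counting over the pairs \<open>(v, x)\<close> with \<open>x\<close> a light neighbour of \<open>v\<close>:
  each light \<open>x\<close> is counted at most twice.\<close>
lemma sum_card_light_nbrs_le:
  assumes "finite V"
  shows "(\<Sum>v\<in>V. card {x \<in> colour_nbrs V f c v. \<not> heavy V f c x}) \<le> 2 * card V"
proof -
  have "(\<Sum>v\<in>V. card {x \<in> colour_nbrs V f c v. \<not> heavy V f c x})
      = (\<Sum>v\<in>V. \<Sum>x\<in>V. if x \<noteq> v \<and> f {v, x} = c \<and> \<not> heavy V f c x then 1 else 0)"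
    using assms by (simp add: colour_nbrs_def card_filter_eq_sum[symmetric] conj_ac)
  also have "\<dots> = (\<Sum>x\<in>V. \<Sum>v\<in>V. if x \<noteq> v \<and> f {v, x} = c \<and> \<not> heavy V f c x then 1 else 0)"
    by (rule sum.swap)
  also have "\<dots> = (\<Sum>x\<in>V. if heavy V f c x then 0 else card (colour_nbrs V f c x))"
    using assms by (intro sum.cong) (auto simp: colour_nbrs_def card_filter_eq_sum insert_commute eq_commute)
  also have "\<dots> \<le> (\<Sum>x\<in>V. 2)"
    by (rule sum_mono) (simp add: heavy_def)
  finally show ?thesis by simp
qed

lemma ex_vertex_few_light_nbrs:
  assumes "finite V" "V \<noteq> {}"
  obtains v where "v \<in> V" "(\<Sum>c\<in>K. card {x \<in> colour_nbrs V f c v. \<not> heavy V f c x}) \<le> 2 * card K"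
proof -
  define s where "s v = (\<Sum>c\<in>K. card {x \<in> colour_nbrs V f c v. \<not> heavy V f c x})" for v
  have "\<exists>v\<in>V. s v \<le> 2 * card K"
  proof (rule ccontr)
    assume "\<not> ?thesis"
    then have "(\<Sum>v\<in>V. 2 * card K) < (\<Sum>v\<in>V. s v)"
      using assms by (intro sum_strict_mono) auto
    also have "\<dots> = (\<Sum>c\<in>K. \<Sum>v\<in>V. card {x \<in> colour_nbrs V f c v. \<not> heavy V f c x})"
      unfolding s_def by (rule sum.swap)
    also have "\<dots> \<le> (\<Sum>c\<in>K. 2 * card V)"
      by (intro sum_mono sum_card_light_nbrs_le assms(1))
    finally show False by simp
  qed
  then show ?thesis using that by (auto simp: s_def)
qed

lemma heavy_nbrs_avoid_colour:
  assumes "no_heavy_triangle V f" "v \<in> V" "heavy V f c v"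
    and "x \<in> colour_nbrs V f c v" "heavy V f c x"
    and "y \<in> colour_nbrs V f c v" "heavy V f c y" "x \<noteq> y"
  shows "f {x, y} \<noteq> c"
proof
  assume "f {x, y} = c"
  with assms(2-8) have "{v, x, y} \<subseteq> V \<and> distinct [v, x, y] \<and> f {v, x} = c \<and> f {v, y} = c \<and>
      f {x, y} = c \<and> heavy V f c v \<and> heavy V f c x \<and> heavy V f c y"
    by (auto simp: colour_nbrs_def)
  with assms(1) show False
    unfolding no_heavy_triangle_def by blast
qed

lemma card_le_Suc_sum_card_colour_nbrs:
  assumes "finite K" "finite V" "v \<in> V" "\<forall>x\<in>V. \<forall>y\<in>V. x \<noteq> y \<longrightarrow> f {x, y} \<in> K"
  shows "card V \<le> Suc (\<Sum>c\<in>K. card (colour_nbrs V f c v))"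
proof -
  have "V \<subseteq> insert v (\<Union>c\<in>K. colour_nbrs V f c v)"
    using assms(3,4) by (force simp: colour_nbrs_def)
  then have "card V \<le> card (insert v (\<Union>c\<in>K. colour_nbrs V f c v))"
    using assms(1,2) by (intro card_mono) (auto simp: colour_nbrs_def)
  also have "\<dots> \<le> Suc (card (\<Union>c\<in>K. colour_nbrs V f c v))"
    by (rule card_insert_le_m1) simp_all
  also have "card (\<Union>c\<in>K. colour_nbrs V f c v) \<le> (\<Sum>c\<in>K. card (colour_nbrs V f c v))"
    by (rule card_UN_le[OF assms(1)])
  finally show ?thesis by simp
qed

fun colour_bound :: "nat \<Rightarrow> nat" where
  "colour_bound 0 = 1"
| "colour_bound (Suc k) = Suc (Suc k * max 2 (colour_bound k) + 2 * Suc k)"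

lemma colour_bound_le: "colour_bound k + 5 \<le> 10 * fact k"
proof (induction k)
  case (Suc k)
  show ?case
  proof (cases "k = 0")
    case False
    have "max 2 (colour_bound k) + 5 \<le> 10 * fact k"
      using Suc.IH fact_ge_1[of k, where 'a = nat] by linarith
    then have "Suc k * (max 2 (colour_bound k) + 5) \<le> Suc k * (10 * fact k)"
      by (rule mult_le_mono2)
    with False show ?thesis by (simp add: algebra_simps)
  qed simp
qed simp

lemma card_le_colour_bound:
  assumes "finite K" "finite V" "\<forall>x\<in>V. \<forall>y\<in>V. x \<noteq> y \<longrightarrow> f {x, y} \<in> K" "no_heavy_triangle V f"
  shows "card V \<le> colour_bound (card K)"
  using assms
proof (induction "card K" arbitrary: K V)
  case 0
  then have "\<forall>x\<in>V. \<forall>y\<in>V. x = y" by auto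
  then show ?case using 0 by (simp add: card_le_Suc0_iff_eq)
next
  case (Suc k K V)
  show ?case
  proof (cases "V = {}")
    case False
    obtain v where v: "v \<in> V"
      and light: "(\<Sum>c\<in>K. card {x \<in> colour_nbrs V f c v. \<not> heavy V f c x}) \<le> 2 * card K"
      using ex_vertex_few_light_nbrs[OF Suc.prems(2) False] .
    have nbrs: "card (colour_nbrs V f c v)
        \<le> max 2 (colour_bound k) + card {x \<in> colour_nbrs V f c v. \<not> heavy V f c x}"
      if "c \<in> K" for c
    proof (cases "heavy V f c v")
      case True
      define H where "H = {x \<in> colour_nbrs V f c v. heavy V f c x}"
      have "card (K - {c}) = k"
        using Suc.hyps(2) Suc.prems(1) that by simp
      moreover have "card H \<le> colour_bound (card (K - {c}))"
      proof (rule Suc.hyps(1))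
        show "\<forall>x\<in>H. \<forall>y\<in>H. x \<noteq> y \<longrightarrow> f {x, y} \<in> K - {c}"
          using Suc.prems(3) heavy_nbrs_avoid_colour[OF Suc.prems(4) v True]
          by (auto simp: H_def colour_nbrs_def)
        show "no_heavy_triangle H f"
          by (rule no_heavy_triangle_subset[OF Suc.prems(4) _ Suc.prems(2)])
            (auto simp: H_def colour_nbrs_def)
      qed (use Suc.hyps(2) Suc.prems(1,2) that in \<open>auto simp: H_def colour_nbrs_def\<close>)
      moreover have "colour_nbrs V f c v = H \<union> {x \<in> colour_nbrs V f c v. \<not> heavy V f c x}"
        by (auto simp: H_def)
      ultimately show ?thesis
        using card_Un_le[of H "{x \<in> colour_nbrs V f c v. \<not> heavy V f c x}"] by auto
    qed (simp add: heavy_def)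
    have "card V \<le> Suc (\<Sum>c\<in>K. card (colour_nbrs V f c v))"
      by (rule card_le_Suc_sum_card_colour_nbrs[OF Suc.prems(1,2) v Suc.prems(3)])
    also have "\<dots> \<le> Suc (\<Sum>c\<in>K. max 2 (colour_bound k) + card {x \<in> colour_nbrs V f c v. \<not> heavy V f c x})"
      using nbrs by (simp add: sum_mono)
    also have "\<dots> \<le> colour_bound (card K)"
      using light Suc.hyps(2)[symmetric] by (simp add: sum.distrib)
    finally show ?thesis .
  qed simp
qed

section \<open>The family \<open>K4_star\<close>\<close>

text \<open>The \<open>r\<^sub>i\<close> lie outside the triangle but may coincide: all equal gives \<open>K4\<close>, two equal gives
  \<open>K4_minus_pendant\<close>, all distinct gives \<open>triangle_pendants\<close>.\<close>
definition pendant_triangle :: "'a graph \<Rightarrow> 'a \<Rightarrow> 'a \<Rightarrow> 'a \<Rightarrow> 'a \<Rightarrow> 'a \<Rightarrow> 'a \<Rightarrow> bool" where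
  "pendant_triangle G q1 q2 q3 r1 r2 r3 \<longleftrightarrow>
     distinct [q1, q2, q3] \<and> {r1, r2, r3} \<inter> {q1, q2, q3} = {} \<and> {q1, q2, q3, r1, r2, r3} \<subseteq> fst G \<and>
     {{q1, q2}, {q1, q3}, {q2, q3}, {q1, r1}, {q2, r2}, {q3, r3}} \<subseteq> snd G"

lemma contains_copy_K4:
  assumes "distinct [a, b, c, d]" "{a, b, c, d} \<subseteq> V"
    "{{a, b}, {a, c}, {a, d}, {b, c}, {b, d}, {c, d}} \<subseteq> E"
  shows "contains_copy (V, E) K4"
  unfolding contains_copy_def K4_def
  by (rule exI[of _ "\<lambda>i. [a, b, c, d] ! i"]) (use assms in \<open>auto simp: inj_on_def\<close>)

lemma contains_copy_K4_minus_pendant: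
  assumes "distinct [a, b, c, d, e]" "{a, b, c, d, e} \<subseteq> V"
    "{{a, b}, {a, c}, {a, d}, {b, c}, {b, d}, {c, e}} \<subseteq> E"
  shows "contains_copy (V, E) K4_minus_pendant"
  unfolding contains_copy_def K4_minus_pendant_def
  by (rule exI[of _ "\<lambda>i. [a, b, c, d, e] ! i"]) (use assms in \<open>auto simp: inj_on_def\<close>)

lemma contains_copy_triangle_pendants:
  assumes "distinct [a, b, c, d, e, g]" "{a, b, c, d, e, g} \<subseteq> V"
    "{{a, b}, {a, c}, {b, c}, {a, d}, {b, e}, {c, g}} \<subseteq> E"
  shows "contains_copy (V, E) triangle_pendants"
  unfolding contains_copy_def triangle_pendants_def
  by (rule exI[of _ "\<lambda>i. [a, b, c, d, e, g] ! i"]) (use assms in \<open>auto simp: inj_on_def\<close>)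

lemma K4_star_copy_if_pendant_triangle:
  assumes "pendant_triangle (V, E) q1 q2 q3 r1 r2 r3"
  shows "\<exists>F\<in>K4_star. contains_copy (V, E) F"
proof -
  consider "r1 = r2" "r2 = r3" | "r1 = r2" "r2 \<noteq> r3" | "r1 = r3" "r1 \<noteq> r2"
    | "r2 = r3" "r1 \<noteq> r2" | "distinct [r1, r2, r3]" by force
  then show ?thesis
  proof cases
    case 1
    then have "contains_copy (V, E) K4"
      using assms by (intro contains_copy_K4[of q1 q2 q3 r1]) (auto simp: pendant_triangle_def)
    then show ?thesis by (auto simp: K4_star_def)
  next
    case 2
    then have "contains_copy (V, E) K4_minus_pendant"
      using assms by (intro contains_copy_K4_minus_pendant[of q1 q2 q3 r1 r3])
        (auto simp: pendant_triangle_def)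
    then show ?thesis by (auto simp: K4_star_def)
  next
    case 3
    then have "contains_copy (V, E) K4_minus_pendant"
      using assms by (intro contains_copy_K4_minus_pendant[of q1 q3 q2 r1 r2])
        (auto simp: pendant_triangle_def insert_commute)
    then show ?thesis by (auto simp: K4_star_def)
  next
    case 4
    then have "contains_copy (V, E) K4_minus_pendant"
      using assms by (intro contains_copy_K4_minus_pendant[of q2 q3 q1 r2 r1])
        (auto simp: pendant_triangle_def insert_commute)
    then show ?thesis by (auto simp: K4_star_def)
  next
    case 5
    then have "contains_copy (V, E) triangle_pendants"
      using assms by (intro contains_copy_triangle_pendants[of q1 q2 q3 r1 r2 r3])
        (auto simp: pendant_triangle_def)
    then show ?thesis by (auto simp: K4_star_def)
  qed
qed

lemma pendant_triangle_if_K4_star_copy: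
  assumes "F \<in> K4_star" "contains_copy G F"
  shows "\<exists>q1 q2 q3 r1 r2 r3. pendant_triangle G q1 q2 q3 r1 r2 r3"
proof -
  obtain \<phi> where \<phi>: "inj_on \<phi> (fst F)" "\<phi> ` fst F \<subseteq> fst G" "\<forall>xy\<in>snd F. \<phi> ` xy \<in> snd G"
    using assms(2) unfolding contains_copy_def by blast
  consider "F = K4" | "F = K4_minus_pendant" | "F = triangle_pendants"
    using assms(1) by (auto simp: K4_star_def)
  then show ?thesis
  proof cases
    case 1
    then have "pendant_triangle G (\<phi> 0) (\<phi> 1) (\<phi> 2) (\<phi> 3) (\<phi> 3) (\<phi> 3)"
      using \<phi> by (auto simp: pendant_triangle_def K4_def inj_on_def)
    then show ?thesis by blast
  next
    case 2
    then have "pendant_triangle G (\<phi> 0) (\<phi> 1) (\<phi> 2) (\<phi> 3) (\<phi> 3) (\<phi> 4)"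
      using \<phi> by (auto simp: pendant_triangle_def K4_minus_pendant_def inj_on_def)
    then show ?thesis by blast
  next
    case 3
    then have "pendant_triangle G (\<phi> 0) (\<phi> 1) (\<phi> 2) (\<phi> 3) (\<phi> 4) (\<phi> 5)"
      using \<phi> by (auto simp: pendant_triangle_def triangle_pendants_def inj_on_def)
    then show ?thesis by blast
  qed
qed

lemma pendant_triangle_if_heavy_triangle:
  assumes "{x, y, z} \<subseteq> V" "distinct [x, y, z]" "f {x, y} = c" "f {x, z} = c" "f {y, z} = c"
    and "heavy V f c x" "heavy V f c y" "heavy V f c z"
  shows "\<exists>r1 r2 r3. pendant_triangle (colour_graph V f c) x y z r1 r2 r3"
proof -
  obtain r1 where r1: "r1 \<in> colour_nbrs V f c x" "r1 \<notin> {y, z}"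
    using heavy_has_nbr_outside[OF assms(6)] .
  obtain r2 where r2: "r2 \<in> colour_nbrs V f c y" "r2 \<notin> {x, z}"
    using heavy_has_nbr_outside[OF assms(7)] .
  obtain r3 where r3: "r3 \<in> colour_nbrs V f c z" "r3 \<notin> {x, y}"
    using heavy_has_nbr_outside[OF assms(8)] .
  have "pendant_triangle (colour_graph V f c) x y z r1 r2 r3"
    using assms r1 r2 r3 by (auto simp: pendant_triangle_def colour_graph_def colour_nbrs_def)
  then show ?thesis by blast
qed

lemma no_heavy_triangle_if_K4_star_free:
  assumes "\<forall>x\<in>V. \<forall>y\<in>V. x \<noteq> y \<longrightarrow> f {x, y} < k"
    and "\<forall>i<k. \<not> (\<exists>F\<in>K4_star. contains_copy (colour_graph V f i) F)"
  shows "no_heavy_triangle V f"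
  unfolding no_heavy_triangle_def
proof (intro notI, elim exE conjE)
  fix c x y z
  assume xyz: "{x, y, z} \<subseteq> V" "distinct [x, y, z]" "f {x, y} = c" "f {x, z} = c" "f {y, z} = c"
    and heavy: "heavy V f c x" "heavy V f c y" "heavy V f c z"
  obtain r1 r2 r3 where "pendant_triangle (colour_graph V f c) x y z r1 r2 r3"
    using pendant_triangle_if_heavy_triangle[OF xyz heavy] by blast
  then have "\<exists>F\<in>K4_star. contains_copy (colour_graph V f c) F"
    unfolding colour_graph_def by (rule K4_star_copy_if_pendant_triangle)
  moreover have "c < k"
    using assms(1) xyz(1-3) by auto
  ultimately show False
    using assms(2) by blast
qed

lemma graph_arrows_K4_star: "graph_arrows K4_star k (Suc (colour_bound k))"
  unfolding graph_arrows_def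
proof (intro allI impI, rule ccontr)
  fix f :: "nat set \<Rightarrow> nat"
  define V where "V = {..<Suc (colour_bound k)}"
  assume "\<forall>e. e \<subseteq> {..<Suc (colour_bound k)} \<and> card e = 2 \<longrightarrow> f e < k"
  then have coloured: "\<forall>x\<in>V. \<forall>y\<in>V. x \<noteq> y \<longrightarrow> f {x, y} < k"
    by (auto simp: V_def)
  assume "\<not> (\<exists>i<k. \<exists>F\<in>K4_star. contains_copy (colour_graph {..<Suc (colour_bound k)} f i) F)"
  then have "no_heavy_triangle V f"
    using coloured by (intro no_heavy_triangle_if_K4_star_free) (auto simp: V_def)
  then have "card V \<le> colour_bound (card {..<k})"
    using coloured by (intro card_le_colour_bound) (auto simp: V_def)
  then show False
    by (simp add: V_def)
qed

lemma R_graph_K4_star: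
  "R_graph K4_star k \<le> Suc (colour_bound k)" "graph_arrows K4_star k (R_graph K4_star k)"
  unfolding R_graph_eq_Inf_graph_arrows using Inf_nat_Collect graph_arrows_K4_star by blast+

lemma R_graph_K4_star_le_fact: "R_graph K4_star k \<le> 10 * fact k"
  using R_graph_K4_star(1)[of k] colour_bound_le[of k] by linarith

lemma ten_le_exp_mult:
  assumes "6 \<le> k"
  shows "10 \<le> exp 1 * real (k - 1)"
proof -
  have "2 \<le> exp (1::real)"
    using exp_ge_add_one_self[of 1] by simp
  moreover have "5 \<le> real (k - 1)"
    using assms by simp
  ultimately have "2 * 5 \<le> exp 1 * real (k - 1)"
    by (intro mult_mono) simp_all
  then show ?thesis
    by (rule order.trans[rotated]) simp
qed

section \<open>Berge-\<open>K4\<close> from the link of a vertex\<close>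

lemma is_berge_K4_if_link_pendant_triangle:
  assumes "v \<notin> V" "pendant_triangle (colour_graph V (\<lambda>e. f (insert v e)) i) q1 q2 q3 r1 r2 r3"
  shows "is_berge (colour_hypergraph (insert v V) f i) K4"
proof -
  define \<phi> where "\<phi> j = [v, q1, q2, q3] ! j" for j
  define e where "e s = (if s = {0, 1} then {v, q1, r1} else if s = {0, 2} then {v, q2, r2}
     else if s = {0, 3} then {v, q3, r3} else if s = {1, 2} then {v, q1, q2}
     else if s = {1, 3} then {v, q1, q3} else {v, q2, q3})" for s :: "nat set"
  have triangle: "distinct [q1, q2, q3]" "{r1, r2, r3} \<inter> {q1, q2, q3} = {}"
    "{q1, q2, q3, r1, r2, r3} \<subseteq> V"
    and edges: "{{q1, q2}, {q1, q3}, {q2, q3}, {q1, r1}, {q2, r2}, {q3, r3}}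
      \<subseteq> {e. e \<subseteq> V \<and> card e = 2 \<and> f (insert v e) = i}"
    using assms(2) by (simp_all add: pendant_triangle_def colour_graph_def)
  have v: "v \<notin> {q1, q2, q3, r1, r2, r3}"
    using assms(1) triangle(3) by blast
  have hyperedges: "e {0, 1} = {v, q1, r1}" "e {0, 2} = {v, q2, r2}" "e {0, 3} = {v, q3, r3}"
    "e {1, 2} = {v, q1, q2}" "e {1, 3} = {v, q1, q3}" "e {2, 3} = {v, q2, q3}"
    by (simp_all add: e_def doubleton_eq_iff)
  have "distinct (map e [{0, 1}, {0, 2}, {0, 3}, {1, 2}, {1, 3}, {2, 3}])"
    using triangle(1,2) v unfolding list.map hyperedges by (auto simp: insert_eq_iff)
  then have "inj_on e (snd K4)"
    unfolding distinct_map K4_def snd_conv list.set by (rule conjunct2)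
  moreover have "e ` snd K4 \<subseteq> snd (colour_hypergraph (insert v V) f i)"
    using triangle v edges unfolding K4_def snd_conv image_insert image_empty hyperedges
    by (auto simp: colour_hypergraph_def insert_commute)
  moreover have "inj_on \<phi> (fst K4)" "\<phi> ` fst K4 \<subseteq> fst (colour_hypergraph (insert v V) f i)"
    using triangle v by (auto simp: K4_def \<phi>_def colour_hypergraph_def inj_on_def)
  moreover have "\<forall>xy\<in>snd K4. \<phi> ` xy \<subseteq> e xy"
    unfolding K4_def snd_conv hyperedges ball_simps by (simp add: \<phi>_def)
  ultimately show ?thesis
    unfolding is_berge_def by blast
qed

lemma berge_arrows_K4_Suc_if_graph_arrows_K4_star:
  assumes "graph_arrows K4_star k n"
  shows "berge_arrows K4 k (Suc n)"
  unfolding berge_arrows_def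
proof (intro allI impI)
  fix f :: "nat set \<Rightarrow> nat"
  assume coloured: "\<forall>e. e \<subseteq> {..<Suc n} \<and> card e = 3 \<longrightarrow> f e < k"
  have "\<forall>e. e \<subseteq> {..<n} \<and> card e = 2 \<longrightarrow> f (insert n e) < k"
  proof (intro allI impI)
    fix e :: "nat set" assume e: "e \<subseteq> {..<n} \<and> card e = 2"
    then have "finite e" "n \<notin> e"
      by (auto intro: card_ge_0_finite)
    with e have "card (insert n e) = 3"
      by simp
    moreover have "insert n e \<subseteq> {..<Suc n}"
      using e by auto
    ultimately show "f (insert n e) < k"
      using coloured by simp
  qed
  then obtain i F where "i < k" "F \<in> K4_star"
    "contains_copy (colour_graph {..<n} (\<lambda>e. f (insert n e)) i) F"
    using assms[unfolded graph_arrows_def, THEN spec[of _ "\<lambda>e. f (insert n e)"]] by blast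
  moreover obtain q1 q2 q3 r1 r2 r3
    where "pendant_triangle (colour_graph {..<n} (\<lambda>e. f (insert n e)) i) q1 q2 q3 r1 r2 r3"
    using pendant_triangle_if_K4_star_copy[OF calculation(2,3)] by blast
  then have "is_berge (colour_hypergraph {..<Suc n} f i) K4"
    using is_berge_K4_if_link_pendant_triangle[of n "{..<n}"] by (simp add: lessThan_Suc)
  moreover have "subhypergraph (colour_hypergraph {..<Suc n} f i) (colour_hypergraph {..<Suc n} f i)"
    by (auto simp: subhypergraph_def colour_hypergraph_def)
  ultimately show "\<exists>i<k. \<exists>H. subhypergraph H (colour_hypergraph {..<Suc n} f i) \<and> is_berge H K4"
    by blast
qed

lemma berge_arrows_K4_Suc_R_graph: "berge_arrows K4 k (Suc (R_graph K4_star k))"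
  by (rule berge_arrows_K4_Suc_if_graph_arrows_K4_star[OF R_graph_K4_star(2)])

lemma R3_berge_K4_le_Suc_R_graph: "R3_berge K4 k \<le> Suc (R_graph K4_star k)"
  unfolding R3_berge_eq_Inf_berge_arrows by (rule Inf_nat_Collect(2)) (rule berge_arrows_K4_Suc_R_graph)

section \<open>Lower bound by random 3-colourings\<close>

lemma card_non_injective_funcset:
  assumes "finite I" "T \<subseteq> I" "card T = 3" "finite C" "card C = 3"
  shows "9 * card {g \<in> I \<rightarrow>\<^sub>E C. \<not> inj_on g T} = 7 * card (I \<rightarrow>\<^sub>E C)"
proof -
  define m where "m = card I - 3"
  have "card I = m + 3"
    using assms(1-3) card_mono[of I T] by (simp add: m_def)
  then have all: "card (I \<rightarrow>\<^sub>E C) = 27 * 3 ^ m"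
    using assms(1,5) by (simp add: card_funcsetE power_add)
  have "card {g \<in> I \<rightarrow>\<^sub>E C. inj_on g T} = 6 * 3 ^ m"
    using card_inj_on_subset_funcset[OF assms(1,4,2)] assms(3,5) \<open>card I = m + 3\<close>
    by (simp add: numeral_3_eq_3 atLeast0_lessThan_Suc)
  moreover have "{g \<in> I \<rightarrow>\<^sub>E C. \<not> inj_on g T} = (I \<rightarrow>\<^sub>E C) - {g \<in> I \<rightarrow>\<^sub>E C. inj_on g T}"
    by blast
  ultimately have "card {g \<in> I \<rightarrow>\<^sub>E C. \<not> inj_on g T} = 21 * 3 ^ m"
    using all assms(1,4) by (simp add: card_Diff_subset finite_PiE)
  with all show ?thesis by simp
qed

lemma card_3_subsets_le:
  assumes "finite I"
  shows "card {T. T \<subseteq> I \<and> card T = 3} \<le> card I ^ 3"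
proof -
  have "card {T. T \<subseteq> I \<and> card T = 3} = card I choose 3"
    using n_subsets[OF assms, of 3] by simp
  also have "\<dots> \<le> card I ^ 3"
    by (cases "3 \<le> card I") (simp_all add: binomial_le_pow binomial_eq_0)
  finally show ?thesis .
qed

lemma ex_colourings_injective_on_triples:
  assumes "finite I" "card I ^ 3 * 7 ^ k < 9 ^ k"
  obtains h where "\<forall>j<k. h j \<in> I \<rightarrow>\<^sub>E {..<3::nat}" "\<forall>T\<subseteq>I. card T = 3 \<longrightarrow> (\<exists>j<k. inj_on (h j) T)"
proof -
  define Fs where "Fs = {..<k} \<rightarrow>\<^sub>E (I \<rightarrow>\<^sub>E {..<3::nat})"
  define Ts where "Ts = {T. T \<subseteq> I \<and> card T = 3}"
  define Bad where "Bad T = {..<k} \<rightarrow>\<^sub>E {g \<in> I \<rightarrow>\<^sub>E {..<3::nat}. \<not> inj_on g T}" for T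
  have finite_Ts: "finite Ts"
    using assms(1) by (auto simp: Ts_def)
  have card_Bad: "9 ^ k * card (Bad T) = 7 ^ k * card Fs" if "T \<in> Ts" for T
  proof -
    have "9 * card {g \<in> I \<rightarrow>\<^sub>E {..<3::nat}. \<not> inj_on g T} = 7 * card (I \<rightarrow>\<^sub>E {..<3::nat})"
      using that assms(1) by (intro card_non_injective_funcset) (auto simp: Ts_def)
    then have "(9 * card {g \<in> I \<rightarrow>\<^sub>E {..<3::nat}. \<not> inj_on g T}) ^ k = (7 * card (I \<rightarrow>\<^sub>E {..<3::nat})) ^ k"
      by simp
    then show ?thesis
      by (simp add: Bad_def Fs_def card_funcsetE power_mult_distrib)
  qed
  have "\<not> Fs \<subseteq> (\<Union>T\<in>Ts. Bad T)"
  proof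
    assume "Fs \<subseteq> (\<Union>T\<in>Ts. Bad T)"
    then have "card Fs \<le> card (\<Union>T\<in>Ts. Bad T)"
      using finite_Ts assms(1) by (intro card_mono) (auto simp: Bad_def finite_PiE)
    also have "\<dots> \<le> (\<Sum>T\<in>Ts. card (Bad T))"
      by (rule card_UN_le[OF finite_Ts])
    finally have "9 ^ k * card Fs \<le> 9 ^ k * (\<Sum>T\<in>Ts. card (Bad T))"
      by simp
    also have "\<dots> = (\<Sum>T\<in>Ts. 9 ^ k * card (Bad T))"
      by (rule sum_distrib_left)
    also have "\<dots> = card Ts * (7 ^ k * card Fs)"
      using card_Bad by simp
    also have "\<dots> \<le> card I ^ 3 * 7 ^ k * card Fs"
      using card_3_subsets_le[OF assms(1)] by (simp add: Ts_def)
    also have "\<dots> < 9 ^ k * card Fs"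
      using assms(2) by (simp add: Fs_def card_funcsetE assms(1))
    finally show False by simp
  qed
  then obtain h where h: "h \<in> Fs" "\<forall>T\<in>Ts. h \<notin> Bad T"
    by blast
  show ?thesis
  proof (rule that)
    show "\<forall>j<k. h j \<in> I \<rightarrow>\<^sub>E {..<3}"
      using h(1) by (simp add: Fs_def PiE_iff)
    show "\<forall>T\<subseteq>I. card T = 3 \<longrightarrow> (\<exists>j<k. inj_on (h j) T)"
      using h by (auto simp: Fs_def Bad_def Ts_def PiE_iff)
  qed
qed

lemma four_le_card_if_berge_K4:
  assumes "is_berge H K4" "\<forall>e\<in>snd H. inj_on g e" "g ` fst H \<subseteq> A" "finite A"
  shows "4 \<le> card A"
proof -
  obtain \<phi> e where \<phi>: "inj_on \<phi> (fst K4)" "\<phi> ` fst K4 \<subseteq> fst H"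
    and e: "e ` snd K4 \<subseteq> snd H" "\<forall>xy\<in>snd K4. \<phi> ` xy \<subseteq> e xy"
    using assms(1) unfolding is_berge_def by (elim exE conjE) (rule that; assumption)
  have edge: "{x, y} \<in> snd K4" if "x \<in> fst K4" "y \<in> fst K4" "x \<noteq> y" for x y
    using that unfolding K4_def fst_conv snd_conv by (simp add: doubleton_eq_iff) arith
  have "inj_on (g \<circ> \<phi>) (fst K4)"
  proof (rule inj_onI)
    fix x y assume xy: "x \<in> fst K4" "y \<in> fst K4" "(g \<circ> \<phi>) x = (g \<circ> \<phi>) y"
    show "x = y"
    proof (rule ccontr)
      assume "x \<noteq> y"
      then have "e {x, y} \<in> snd H" "\<phi> x \<in> e {x, y}" "\<phi> y \<in> e {x, y}"
        using edge[OF xy(1,2)] e by auto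
      then have "\<phi> x = \<phi> y"
        using assms(2) xy(3) by (auto dest: inj_onD)
      then show False
        using inj_onD[OF \<phi>(1) _ xy(1,2)] \<open>x \<noteq> y\<close> by blast
    qed
  qed
  then have "card ((g \<circ> \<phi>) ` fst K4) = 4"
    by (simp add: card_image K4_def)
  moreover have "card ((g \<circ> \<phi>) ` fst K4) \<le> card A"
    using \<phi>(2) assms(3,4) by (intro card_mono) auto
  ultimately show ?thesis
    by simp
qed

lemma not_berge_arrows_K4:
  assumes "n ^ 3 * 7 ^ k < 9 ^ k"
  shows "\<not> berge_arrows K4 k n"
proof
  assume arrows: "berge_arrows K4 k n"
  obtain h where h: "\<forall>j<k. h j \<in> {..<n} \<rightarrow>\<^sub>E {..<3::nat}"
    "\<forall>T\<subseteq>{..<n}. card T = 3 \<longrightarrow> (\<exists>j<k. inj_on (h j) T)"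
    using ex_colourings_injective_on_triples[of "{..<n}" k] assms by auto
  define col where "col T = (LEAST j. j < k \<and> inj_on (h j) T)" for T
  have col: "col T < k \<and> inj_on (h (col T)) T" if "T \<subseteq> {..<n}" "card T = 3" for T
  proof -
    have "\<exists>j. j < k \<and> inj_on (h j) T"
      using h(2) that by blast
    then show ?thesis
      unfolding col_def by (rule LeastI_ex)
  qed
  then have "\<forall>e. e \<subseteq> {..<n} \<and> card e = 3 \<longrightarrow> col e < k"
    by blast
  then obtain i H where i: "i < k" and H: "subhypergraph H (colour_hypergraph {..<n} col i)"
    and berge: "is_berge H K4"
    using arrows[unfolded berge_arrows_def, THEN spec[of _ col]] by blast
  have "\<forall>e\<in>snd H. inj_on (h i) e"
  proof
    fix e assume "e \<in> snd H"
    then have "e \<subseteq> {..<n}" "card e = 3" "col e = i"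
      using H by (auto simp: subhypergraph_def colour_hypergraph_def)
    then show "inj_on (h i) e"
      using col by blast
  qed
  moreover have "h i ` fst H \<subseteq> {..<3}"
    using i H h(1) by (auto simp: subhypergraph_def colour_hypergraph_def PiE_iff)
  ultimately have "4 \<le> card {..<3::nat}"
    using four_le_card_if_berge_K4[OF berge] by blast
  then show False by simp
qed

lemma hashing_count_lt:
  assumes "k \<ge> 1"
  shows "(2 ^ (k div 9)) ^ 3 * 7 ^ k < (9::nat) ^ k"
proof -
  define m where "m = k div 9"
  define r where "r = k mod 9"
  have k: "k = 9 * m + r"
    by (simp add: m_def r_def)
  have "(2 ^ m) ^ 3 * 7 ^ k = 2 ^ (3 * m) * 7 ^ (9 * m) * (7::nat) ^ r"
    unfolding k by (simp add: power_add ac_simps flip: power_mult)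
  also have "\<dots> = (8 * 7 ^ 9) ^ m * 7 ^ r"
    by (simp only: power_mult power_mult_distrib) simp
  also have "\<dots> < (9 ^ 9) ^ m * 9 ^ r"
  proof (cases "m = 0")
    case True
    then have "r \<noteq> 0" using assms k by simp
    then have "(7::nat) ^ r < 9 ^ r" by (intro power_strict_mono) simp_all
    with True show ?thesis by simp
  next
    case False
    have "(8 * 7 ^ 9 :: nat) < 9 ^ 9" by simp
    then have "(8 * 7 ^ 9 :: nat) ^ m < (9 ^ 9) ^ m"
      using False by (intro power_strict_mono) simp_all
    moreover have "(7::nat) ^ r \<le> 9 ^ r"
      by (rule power_mono) simp_all
    ultimately show ?thesis
      by (intro mult_less_le_imp_less) simp_all
  qed
  also have "\<dots> = 9 ^ k"
    unfolding k by (simp only: power_add power_mult)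
  finally show ?thesis by (simp only: m_def)
qed

lemma two_powr_le_Suc_pow:
  "2 powr (1/27 * real k) \<le> 2 ^ (k div 9) + 1"
proof (cases "k < 9")
  case True
  then have "2 powr (1/27 * real k) \<le> 2 powr 1"
    by (intro powr_mono) auto
  then show ?thesis
    using True by simp
next
  case False
  then have "k \<le> 27 * (k div 9)"
    by presburger
  then have "1/27 * real k \<le> real (k div 9)"
    by linarith
  then have "2 powr (1/27 * real k) \<le> 2 powr real (k div 9)"
    by (intro powr_mono) auto
  then show ?thesis
    by (simp add: powr_realpow)
qed

lemma R3_berge_K4_gt_pow:
  assumes "k \<ge> 1"
  shows "2 ^ (k div 9) < R3_berge K4 k"
  using less_R3_berge[OF berge_arrows_K4_Suc_R_graph not_berge_arrows_K4[OF hashing_count_lt[OF assms]]] .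

lemma R3_berge_K4_lower_bound:
  assumes "k \<ge> 1"
  shows "2 powr (1/27 * real k) \<le> real (R3_berge K4 k)"
proof -
  have "2 powr (1/27 * real k) \<le> 2 ^ (k div 9) + 1"
    by (rule two_powr_le_Suc_pow)
  also have "\<dots> = real (2 ^ (k div 9) + 1)"
    by simp
  also have "\<dots> \<le> real (R3_berge K4 k)"
    using R3_berge_K4_gt_pow[OF assms] by (simp only: of_nat_le_iff Suc_eq_plus1[symmetric] Suc_le_eq)
  finally show ?thesis .
qed

theorem theorem4:
  shows "(\<exists>c::real. c > 0 \<and> (\<forall>k::nat. k \<ge> 2 \<longrightarrow>
            2 powr (c * real k) \<le> real (R3_berge K4 k) \<and>
            R3_berge K4 k \<le> R_graph K4_star k + 1))
       \<and> (\<exists>g :: nat \<Rightarrow> real. g \<longlonglongrightarrow> 0 \<and>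
            (\<forall>\<^sub>F k in sequentially.
               real (R_graph K4_star k) \<le> exp 1 * (1 + g k) * real (k - 1) * fact k))"
proof (intro conjI exI[of _ "1/27"] exI[of _ "\<lambda>_. 0"] allI impI)
  fix k :: nat
  assume "k \<ge> 2"
  then show "2 powr (1/27 * real k) \<le> real (R3_berge K4 k)"
    by (intro R3_berge_K4_lower_bound) simp
  show "R3_berge K4 k \<le> R_graph K4_star k + 1"
    using R3_berge_K4_le_Suc_R_graph by simp
next
  show "\<forall>\<^sub>F k in sequentially. real (R_graph K4_star k) \<le> exp 1 * (1 + 0) * real (k - 1) * fact k"
  proof (rule eventually_sequentiallyI)
    fix k :: nat
    assume "6 \<le> k"
    have "real (R_graph K4_star k) \<le> real (10 * fact k)"
      using R_graph_K4_star_le_fact by (simp only: of_nat_le_iff)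
    also have "\<dots> = 10 * fact k"
      by simp
    also have "\<dots> \<le> exp 1 * real (k - 1) * fact k"
      by (rule mult_right_mono[OF ten_le_exp_mult[OF \<open>6 \<le> k\<close>]]) simp
    finally show "real (R_graph K4_star k) \<le> exp 1 * (1 + 0) * real (k - 1) * fact k"
      by simp
  qed
qed simp_all

end
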